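(* Let $\mathcal{R}$ be a cell space whose stabiliser $G_0$ is finite, and let $(F_i)_{i\in I}$ be a net, indexed by a directed set $(I,\leq)$, of nonempty finite subsets of $M$. Then $(F_i)_{i\in I}$ is a right Følner net in $\mathcal{R}$ if and only if for every finite subset $E\subseteq G/G_0$ we have $\lim_{i\in I}\frac{|\partial_E F_i|}{|F_i|}=0$.
   Context: A cell space $\mathcal{R}$ consists of a group $G$ acting transitively on the left on a nonempty set $M$ via $\triangleright$, a point $m_0\in M$ and a family $(g_{m_0,m})_{m\in M}$ in $G$ with $g_{m_0,m}\triangleright m_0=m$. $G_0$ is the stabiliser of $m_0$, $G/G_0$ the set of left cosets. The right semi-action $\triangleleft\colon M\times G/G_0\to M$ is $m\triangleleft gG_0=g_{m_0,m}g\triangleright m_0$; for $E\subseteq G/G_0$, $m\triangleleft E=\{m\triangleleft e:e\in E\}$, and $(\cdot\triangleleft\mathfrak{g})^{-1}(A)=\{m\in M: m\triangleleft\mathfrak{g}\in A\}$. For $A\subseteq M$ and $E\subseteq G/G_0$: $A^{-E}=\{m\in M: m\triangleleft E\subseteq A\}$, $A^{+E}=\{m\in M:(m\triangleleft E)\cap A\neq\emptyset\}$, $\partial_E A=A^{+E}\setminus A^{-E}$. A right Følner net in $\mathcal{R}$ is a net $(F_i)_{i\in I}$ of nonempty finite subsets of $M$ such that for every $\mathfrak{g}\in G/G_0$, $\lim_{i\in I}\frac{|F_i\setminus(\cdot\triangleleft\mathfrak{g})^{-1}(F_i)|}{|F_i|}=0$. *)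

theory Defs
  imports "HOL-Algebra.Group_Action" "HOL-Algebra.Left_Coset" Complex_Main
begin

definition cell_space ::
  "('g, 'b) monoid_scheme \<Rightarrow> 'm set \<Rightarrow> ('g \<Rightarrow> 'm \<Rightarrow> 'm) \<Rightarrow> 'm \<Rightarrow> ('m \<Rightarrow> 'g) \<Rightarrow> bool" where
  "cell_space G M act m0 gfam \<longleftrightarrow>
     group_action G M act \<and> M \<noteq> {} \<and> m0 \<in> M \<and>
     (\<forall>x\<in>M. \<forall>y\<in>M. \<exists>g\<in>carrier G. act g x = y) \<and>
     (\<forall>m\<in>M. gfam m \<in> carrier G \<and> act (gfam m) m0 = m)"

text \<open>Right semi-action  m \<triangleleft> gG0 = (gfam m * g) \<triangleright> m0 (independent of the representative).\<close>
definition semi_act ::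
  "('g, 'b) monoid_scheme \<Rightarrow> ('g \<Rightarrow> 'm \<Rightarrow> 'm) \<Rightarrow> 'm \<Rightarrow> ('m \<Rightarrow> 'g) \<Rightarrow> 'm \<Rightarrow> 'g set \<Rightarrow> 'm" where
  "semi_act G act m0 gfam m c = act (gfam m \<otimes>\<^bsub>G\<^esub> (SOME g. g \<in> c)) m0"

definition semi_preimage where
  "semi_preimage G M act m0 gfam c A = {m \<in> M. semi_act G act m0 gfam m c \<in> A}"

definition interior_E where
  "interior_E G M act m0 gfam E A = {m \<in> M. \<forall>e\<in>E. semi_act G act m0 gfam m e \<in> A}"

definition closure_E where
  "closure_E G M act m0 gfam E A = {m \<in> M. \<exists>e\<in>E. semi_act G act m0 gfam m e \<in> A}"

definition boundary_E where
  "boundary_E G M act m0 gfam E A = closure_E G M act m0 gfam E A - interior_E G M act m0 gfam E A"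

definition directed_set :: "'i set \<Rightarrow> ('i \<Rightarrow> 'i \<Rightarrow> bool) \<Rightarrow> bool" where
  "directed_set I rel \<longleftrightarrow> I \<noteq> {} \<and> (\<forall>i\<in>I. rel i i) \<and>
     (\<forall>i\<in>I. \<forall>j\<in>I. \<forall>k\<in>I. rel i j \<longrightarrow> rel j k \<longrightarrow> rel i k) \<and>
     (\<forall>i\<in>I. \<forall>j\<in>I. \<exists>k\<in>I. rel i k \<and> rel j k)"

definition net_tendsto :: "'i set \<Rightarrow> ('i \<Rightarrow> 'i \<Rightarrow> bool) \<Rightarrow> ('i \<Rightarrow> real) \<Rightarrow> real \<Rightarrow> bool" where
  "net_tendsto I rel x L \<longleftrightarrow> (\<forall>\<epsilon>>0. \<exists>i0\<in>I. \<forall>i\<in>I. rel i0 i \<longrightarrow> \<bar>x i - L\<bar> < \<epsilon>)"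

definition right_folner_net where
  "right_folner_net G M act m0 gfam I rel F \<longleftrightarrow>
     (\<forall>i\<in>I. F i \<noteq> {} \<and> finite (F i) \<and> F i \<subseteq> M) \<and>
     (\<forall>c\<in>lcosets\<^bsub>G\<^esub> (stabilizer G act m0).
        net_tendsto I rel
          (\<lambda>i. real (card (F i - semi_preimage G M act m0 gfam c (F i))) / real (card (F i))) 0)"

end

theory Submission
  imports Defs
begin

text \<open>If \<open>m\<close> lies in \<open>\<partial>\<^sub>E A\<close>, choose cosets \<open>e, e' \<in> E\<close> with \<open>m \<triangleleft> e \<in> A\<close> and
  \<open>m \<triangleleft> e' \<notin> A\<close>, and put \<open>f = m \<triangleleft> e\<close>. The chosen elements \<open>g\<^sub>m\<close> and \<open>g\<^sub>f\<close> differ only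
  by an element \<open>h\<close> of the stabiliser \<open>G\<^sub>0\<close> and the representative \<open>k\<close> of \<open>e\<close>, so
  \<open>m = f \<triangleleft> (h k\<^sup>-\<^sup>1 G\<^sub>0)\<close> and \<open>m \<triangleleft> e' = f \<triangleleft> (h k\<^sup>-\<^sup>1 k' G\<^sub>0)\<close>. Hence \<open>\<partial>\<^sub>E A\<close> is covered by
  \<open>|G\<^sub>0| |E|\<^sup>2\<close> images of sets \<open>A - (\<cdot> \<triangleleft> \<gamma>)\<^sup>-\<^sup>1(A)\<close>, and finiteness of \<open>G\<^sub>0\<close> bounds
  \<open>|\<partial>\<^sub>E A|\<close> by a finite sum of Folner defects. Conversely \<open>m \<triangleleft> G\<^sub>0 = m\<close>, so
  \<open>A - (\<cdot> \<triangleleft> \<gamma>)\<^sup>-\<^sup>1(A) \<subseteq> \<partial>\<^bsub>{G\<^sub>0, \<gamma>}\<^esub> A\<close>. Limits along the directed set are limits along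
  the filter of its tails.\<close>

lemma directed_setD:
  assumes "directed_set I rel"
  shows "I \<noteq> {}"
    and "\<lbrakk>i \<in> I; j \<in> I; k \<in> I; rel i j; rel j k\<rbrakk> \<Longrightarrow> rel i k"
    and "\<lbrakk>i \<in> I; j \<in> I\<rbrakk> \<Longrightarrow> \<exists>k\<in>I. rel i k \<and> rel j k"
  using assms unfolding directed_set_def by blast+

definition net_filter :: "'i set \<Rightarrow> ('i \<Rightarrow> 'i \<Rightarrow> bool) \<Rightarrow> 'i filter" where
  "net_filter I rel = (INF i\<in>I. principal {j \<in> I. rel i j})"

lemma eventually_net_filter:
  assumes "directed_set I rel"
  shows "eventually P (net_filter I rel) \<longleftrightarrow> (\<exists>i0\<in>I. \<forall>i\<in>I. rel i0 i \<longrightarrow> P i)"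
proof -
  have "\<exists>k\<in>I. principal {j \<in> I. rel k j} \<le> inf (principal {j \<in> I. rel i j}) (principal {j \<in> I. rel i' j})"
    if ii: "i \<in> I" "i' \<in> I" for i i'
  proof -
    obtain k where k: "k \<in> I" "rel i k" "rel i' k"
      using directed_setD(3)[OF assms ii] by blast
    have "{j \<in> I. rel k j} \<subseteq> {j \<in> I. rel i j} \<inter> {j \<in> I. rel i' j}"
      using directed_setD(2)[OF assms] ii k by blast
    with k(1) show ?thesis
      by auto
  qed
  with directed_setD(1)[OF assms] show ?thesis
    unfolding net_filter_def by (simp add: eventually_INF_base eventually_principal) blast
qed

lemma eventually_net_filterI:
  assumes "directed_set I rel" "\<forall>i\<in>I. P i"
  shows "eventually P (net_filter I rel)"
proof -
  obtain i0 where "i0 \<in> I"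
    using directed_setD(1)[OF assms(1)] by blast
  with assms show ?thesis
    unfolding eventually_net_filter[OF assms(1)] by blast
qed

lemma net_tendsto_iff_tendsto:
  assumes "directed_set I rel"
  shows "net_tendsto I rel x L \<longleftrightarrow> (x \<longlongrightarrow> L) (net_filter I rel)"
  unfolding net_tendsto_def tendsto_iff eventually_net_filter[OF assms] dist_real_def ..

lemma (in group) inv_mult_cancel_left: "x \<in> carrier G \<Longrightarrow> y \<in> carrier G \<Longrightarrow> x \<otimes> (inv x \<otimes> y) = y"
  by (simp add: m_assoc[symmetric])

locale cell_space_setting =
  fixes G :: "('g, 'b) monoid_scheme" (structure) and M :: "'m set"
    and act :: "'g \<Rightarrow> 'm \<Rightarrow> 'm" and m0 :: 'm and gfam :: "'m \<Rightarrow> 'g"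
  assumes cell_space: "cell_space G M act m0 gfam"
begin

abbreviation H :: "'g set" where "H \<equiv> stabilizer G act m0"

abbreviation ract :: "'m \<Rightarrow> 'g set \<Rightarrow> 'm" where "ract \<equiv> semi_act G act m0 gfam"

sublocale group_action G M act
  using cell_space unfolding cell_space_def by blast

sublocale group G
  using group_hom group_hom.axioms(1) by blast

lemma base_point: "m0 \<in> M"
  using cell_space unfolding cell_space_def by blast

lemma gfam_closed: "m \<in> M \<Longrightarrow> gfam m \<in> carrier G"
  using cell_space unfolding cell_space_def by blast

lemma act_gfam: "m \<in> M \<Longrightarrow> act (gfam m) m0 = m"
  using cell_space unfolding cell_space_def by blast

lemma subgroup_stabilizer: "subgroup H G"
  using stabilizer_subgroup[OF base_point] .

lemma act_base_point_closed: "g \<in> carrier G \<Longrightarrow> act g m0 \<in> M"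
  using element_image[OF _ base_point refl] .

lemma some_in_lcoset:
  assumes "c \<in> lcosets H"
  shows "(SOME g. g \<in> c) \<in> c" and "(SOME g. g \<in> c) \<in> carrier G"
proof -
  obtain k where k: "k \<in> carrier G" "c = k <# H"
    using assms unfolding LCOSETS_def by blast
  then have "k \<in> c"
    using lcos_self[OF k(1) subgroup_stabilizer] by simp
  then show "(SOME g. g \<in> c) \<in> c"
    by (rule someI)
  then show "(SOME g. g \<in> c) \<in> carrier G"
    using k l_coset_subset_G[OF stabilizer_subset k(1)] by blast
qed

lemma act_l_coset_stabilizer:
  assumes "g \<in> carrier G" "g' \<in> g <# H"
  shows "act g' m0 = act g m0"
proof -
  obtain h where h: "h \<in> H" "g' = g \<otimes> h"
    using assms(2) unfolding l_coset_def by blast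
  then have "h \<in> carrier G" "act h m0 = m0"
    unfolding stabilizer_def by auto
  with h(2) assms(1) show ?thesis
    using composition_rule[OF base_point] by simp
qed

lemma semi_act_l_coset:
  assumes "k \<in> carrier G" "m \<in> M"
  shows "ract m (k <# H) = act (gfam m \<otimes> k) m0"
proof -
  have "k <# H \<in> lcosets H"
    using assms(1) unfolding LCOSETS_def by blast
  then obtain h where "h \<in> H" "(SOME g. g \<in> k <# H) = k \<otimes> h"
    using some_in_lcoset(1) unfolding l_coset_def by blast
  moreover from this(1) have "h \<in> carrier G"
    using stabilizer_subset by blast
  ultimately have "gfam m \<otimes> (SOME g. g \<in> k <# H) \<in> (gfam m \<otimes> k) <# H"
    using assms gfam_closed[OF assms(2)] unfolding l_coset_def by (auto simp: m_assoc intro!: bexI[of _ h])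
  then show ?thesis
    unfolding semi_act_def using assms gfam_closed by (intro act_l_coset_stabilizer) simp_all
qed

lemma semi_act_stabilizer: "m \<in> M \<Longrightarrow> ract m H = m"
  using semi_act_l_coset[of \<one> m] lcos_mult_one[OF stabilizer_subset] gfam_closed act_gfam
  by simp

lemma semi_act_rebase:
  assumes m: "m \<in> M" and k: "k \<in> carrier G"
  obtains h where "h \<in> H"
    and "\<And>g. g \<in> carrier G \<Longrightarrow> ract m (g <# H) = ract (act (gfam m \<otimes> k) m0) ((h \<otimes> inv k \<otimes> g) <# H)"
proof -
  define f where "f = act (gfam m \<otimes> k) m0"
  have f: "f \<in> M"
    unfolding f_def using m k gfam_closed by (intro act_base_point_closed) simp
  define h where "h = inv (gfam f) \<otimes> (gfam m \<otimes> k)"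
  have hc: "h \<in> carrier G"
    unfolding h_def using f m k gfam_closed by simp
  have "act h m0 = act (inv (gfam f)) (act (gfam m \<otimes> k) m0)"
    unfolding h_def using composition_rule[OF base_point] f m k gfam_closed by simp
  also have "\<dots> = m0"
    unfolding f_def[symmetric] using orbit_sym_aux[OF gfam_closed[OF f] base_point act_gfam[OF f]] .
  finally have "h \<in> H"
    using hc unfolding stabilizer_def by simp
  moreover have "ract m (g <# H) = ract f ((h \<otimes> inv k \<otimes> g) <# H)" if g: "g \<in> carrier G" for g
  proof -
    have "gfam f \<otimes> (h \<otimes> inv k \<otimes> g) = gfam m \<otimes> g"
      unfolding h_def using f m k g gfam_closed by (simp add: m_assoc inv_mult_cancel_left)
    then show ?thesis
      using semi_act_l_coset f m k g hc by simp
  qed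
  ultimately show ?thesis
    using that unfolding f_def by blast
qed

lemma boundary_E_subset_UN:
  assumes "E \<subseteq> lcosets H"
  defines "R \<equiv> (\<lambda>c. SOME g. g \<in> c) ` E"
  shows "boundary_E G M act m0 gfam E A \<subseteq>
    (\<Union>(h, k, g) \<in> H \<times> R \<times> R. (\<lambda>f. ract f ((h \<otimes> inv k) <# H)) `
       (A - semi_preimage G M act m0 gfam ((h \<otimes> inv k \<otimes> g) <# H) A))"
proof
  fix m assume "m \<in> boundary_E G M act m0 gfam E A"
  then obtain e1 e2 where m: "m \<in> M"
    and e: "e1 \<in> E" "e2 \<in> E" "ract m e1 \<in> A" "ract m e2 \<notin> A"
    unfolding boundary_E_def closure_E_def interior_E_def by blast
  define k where "k = (SOME g. g \<in> e1)"
  define g where "g = (SOME g. g \<in> e2)"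
  have kg: "k \<in> R" "g \<in> R" "k \<in> carrier G" "g \<in> carrier G"
    using e(1,2) assms(1) some_in_lcoset(2) unfolding R_def k_def g_def by auto
  have f: "ract m e1 = act (gfam m \<otimes> k) m0"
    unfolding semi_act_def k_def ..
  obtain h where h: "h \<in> H"
    and rebase: "\<And>g'. g' \<in> carrier G \<Longrightarrow> ract m (g' <# H) = ract (ract m e1) ((h \<otimes> inv k \<otimes> g') <# H)"
    using semi_act_rebase[OF m kg(3)] unfolding f by blast
  have "h \<in> carrier G"
    using h stabilizer_subset by blast
  then have "m = ract (ract m e1) ((h \<otimes> inv k) <# H)"
    using rebase[of \<one>] semi_act_stabilizer[OF m] lcos_mult_one[OF stabilizer_subset] kg(3) by simp
  moreover have "ract (ract m e1) ((h \<otimes> inv k \<otimes> g) <# H) \<notin> A"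
    using rebase[OF kg(4)] semi_act_l_coset[OF kg(4) m] e(4) unfolding semi_act_def g_def by simp
  then have "ract m e1 \<in> A - semi_preimage G M act m0 gfam ((h \<otimes> inv k \<otimes> g) <# H) A"
    using e(3) unfolding semi_preimage_def by blast
  ultimately show "m \<in> (\<Union>(h, k, g) \<in> H \<times> R \<times> R. (\<lambda>f. ract f ((h \<otimes> inv k) <# H)) `
       (A - semi_preimage G M act m0 gfam ((h \<otimes> inv k \<otimes> g) <# H) A))"
    using h kg(1,2) by blast
qed

lemma card_boundary_E_le:
  assumes "finite H" "finite E" "E \<subseteq> lcosets H" "finite A"
  defines "R \<equiv> (\<lambda>c. SOME g. g \<in> c) ` E"
  shows "finite (boundary_E G M act m0 gfam E A)"
    and "card (boundary_E G M act m0 gfam E A) \<le>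
      (\<Sum>(h, k, g) \<in> H \<times> R \<times> R. card (A - semi_preimage G M act m0 gfam ((h \<otimes> inv k \<otimes> g) <# H) A))"
proof -
  let ?U = "\<lambda>(h, k, g). (\<lambda>f. ract f ((h \<otimes> inv k) <# H)) `
       (A - semi_preimage G M act m0 gfam ((h \<otimes> inv k \<otimes> g) <# H) A)"
  have fin: "finite (H \<times> R \<times> R)"
    using assms(1,2) unfolding R_def by simp
  have sub: "boundary_E G M act m0 gfam E A \<subseteq> \<Union> (?U ` (H \<times> R \<times> R))"
    using boundary_E_subset_UN[OF assms(3)] unfolding R_def .
  have finU: "finite (\<Union> (?U ` (H \<times> R \<times> R)))"
    using fin assms(4) by auto
  show "finite (boundary_E G M act m0 gfam E A)"
    using finite_subset[OF sub finU] .
  have "card (boundary_E G M act m0 gfam E A) \<le> card (\<Union> (?U ` (H \<times> R \<times> R)))"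
    using card_mono[OF finU sub] .
  also have "\<dots> \<le> (\<Sum>s \<in> H \<times> R \<times> R. card (?U s))"
    using card_UN_le[OF fin] .
  also have "\<dots> \<le> (\<Sum>(h, k, g) \<in> H \<times> R \<times> R. card (A - semi_preimage G M act m0 gfam ((h \<otimes> inv k \<otimes> g) <# H) A))"
    by (rule sum_mono) (auto intro: card_image_le simp: assms(4))
  finally show "card (boundary_E G M act m0 gfam E A) \<le>
      (\<Sum>(h, k, g) \<in> H \<times> R \<times> R. card (A - semi_preimage G M act m0 gfam ((h \<otimes> inv k \<otimes> g) <# H) A))" .
qed

lemma diff_semi_preimage_subset_boundary_E:
  assumes "A \<subseteq> M"
  shows "A - semi_preimage G M act m0 gfam c A \<subseteq> boundary_E G M act m0 gfam {H, c} A"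
  using assms semi_act_stabilizer
  unfolding boundary_E_def closure_E_def interior_E_def semi_preimage_def by auto

lemma boundary_ratio_tendsto_zero:
  assumes "finite H" "finite E" "E \<subseteq> lcosets H"
    and "eventually (\<lambda>i. finite (F i)) Fl"
    and "\<forall>c \<in> lcosets H. ((\<lambda>i. real (card (F i - semi_preimage G M act m0 gfam c (F i))) / real (card (F i)))
           \<longlongrightarrow> 0) Fl"
  shows "((\<lambda>i. real (card (boundary_E G M act m0 gfam E (F i))) / real (card (F i))) \<longlongrightarrow> 0) Fl"
proof -
  define R where "R = (\<lambda>c. SOME g. g \<in> c) ` E"
  have R: "R \<subseteq> carrier G"
    using assms(3) some_in_lcoset(2) unfolding R_def by auto
  have sum_lim: "((\<lambda>i. \<Sum>(h, k, g) \<in> H \<times> R \<times> R.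
      real (card (F i - semi_preimage G M act m0 gfam ((h \<otimes> inv k \<otimes> g) <# H) (F i))) / real (card (F i))) \<longlongrightarrow> 0) Fl"
  proof (rule tendsto_null_sum, clarify)
    fix h k g assume "h \<in> H" "k \<in> R" "g \<in> R"
    then have "h \<in> carrier G" "k \<in> carrier G" "g \<in> carrier G"
      using R stabilizer_subset by blast+
    then have "h \<otimes> inv k \<otimes> g \<in> carrier G"
      by simp
    then have "(h \<otimes> inv k \<otimes> g) <# H \<in> lcosets H"
      unfolding LCOSETS_def by blast
    then show "((\<lambda>i. real (card (F i - semi_preimage G M act m0 gfam ((h \<otimes> inv k \<otimes> g) <# H) (F i)))
        / real (card (F i))) \<longlongrightarrow> 0) Fl"
      using assms(5) by blast
  qed
  have bound: "eventually (\<lambda>i. real (card (boundary_E G M act m0 gfam E (F i))) / real (card (F i)) \<le>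
      (\<Sum>(h, k, g) \<in> H \<times> R \<times> R.
        real (card (F i - semi_preimage G M act m0 gfam ((h \<otimes> inv k \<otimes> g) <# H) (F i))) / real (card (F i)))) Fl"
    using assms(4)
  proof eventually_elim
    case (elim i)
    have "real (card (boundary_E G M act m0 gfam E (F i))) \<le>
        (\<Sum>(h, k, g) \<in> H \<times> R \<times> R. real (card (F i - semi_preimage G M act m0 gfam ((h \<otimes> inv k \<otimes> g) <# H) (F i))))"
      using card_boundary_E_le(2)[OF assms(1-3) elim, folded R_def]
      unfolding split_def by (simp only: of_nat_sum[symmetric] of_nat_le_iff)
    then show ?case
      unfolding split_def sum_divide_distrib[symmetric] by (rule divide_right_mono) simp
  qed
  show ?thesis
    by (rule tendsto_sandwich[OF always_eventually bound tendsto_const sum_lim]) simp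
qed

lemma folner_ratio_tendsto_zero:
  assumes "finite H" "c \<in> lcosets H"
    and "eventually (\<lambda>i. finite (F i) \<and> F i \<subseteq> M) Fl"
    and "\<forall>E. finite E \<and> E \<subseteq> lcosets H \<longrightarrow>
      ((\<lambda>i. real (card (boundary_E G M act m0 gfam E (F i))) / real (card (F i))) \<longlongrightarrow> 0) Fl"
  shows "((\<lambda>i. real (card (F i - semi_preimage G M act m0 gfam c (F i))) / real (card (F i))) \<longlongrightarrow> 0) Fl"
proof -
  have "H \<in> lcosets H"
    using lcos_mult_one[OF stabilizer_subset] unfolding LCOSETS_def by force
  with assms(2) have E: "finite {H, c}" "{H, c} \<subseteq> lcosets H"
    by auto
  have bound: "eventually (\<lambda>i. real (card (F i - semi_preimage G M act m0 gfam c (F i))) / real (card (F i)) \<le>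
      real (card (boundary_E G M act m0 gfam {H, c} (F i))) / real (card (F i))) Fl"
    using assms(3)
  proof eventually_elim
    case (elim i)
    then show ?case
      using card_mono[OF card_boundary_E_le(1)[OF assms(1) E] diff_semi_preimage_subset_boundary_E]
      by (simp add: divide_right_mono)
  qed
  show ?thesis
    using assms(4) E by (intro tendsto_sandwich[OF always_eventually bound tendsto_const]) simp_all
qed

end

theorem theorem1:
  fixes G :: "('g, 'b) monoid_scheme" and M :: "'m set" and act :: "'g \<Rightarrow> 'm \<Rightarrow> 'm"
    and m0 :: 'm and gfam :: "'m \<Rightarrow> 'g"
    and I :: "'i set" and rel :: "'i \<Rightarrow> 'i \<Rightarrow> bool" and F :: "'i \<Rightarrow> 'm set"
  assumes "cell_space G M act m0 gfam"
    and "finite (stabilizer G act m0)"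
    and "directed_set I rel"
    and "\<forall>i\<in>I. F i \<noteq> {} \<and> finite (F i) \<and> F i \<subseteq> M"
  shows "right_folner_net G M act m0 gfam I rel F \<longleftrightarrow>
    (\<forall>E. finite E \<and> E \<subseteq> lcosets\<^bsub>G\<^esub> (stabilizer G act m0) \<longrightarrow>
       net_tendsto I rel
         (\<lambda>i. real (card (boundary_E G M act m0 gfam E (F i))) / real (card (F i))) 0)"
proof -
  interpret cell_space_setting G M act m0 gfam
    using assms(1) by unfold_locales
  have cells: "eventually (\<lambda>i. finite (F i) \<and> F i \<subseteq> M) (net_filter I rel)"
    using assms(4) by (intro eventually_net_filterI[OF assms(3)]) blast
  then have finite_cells: "eventually (\<lambda>i. finite (F i)) (net_filter I rel)"
    by (rule eventually_mono) blast
  show ?thesis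
  proof
    assume "right_folner_net G M act m0 gfam I rel F"
    then show "\<forall>E. finite E \<and> E \<subseteq> lcosets\<^bsub>G\<^esub> (stabilizer G act m0) \<longrightarrow>
        net_tendsto I rel (\<lambda>i. real (card (boundary_E G M act m0 gfam E (F i))) / real (card (F i))) 0"
      using boundary_ratio_tendsto_zero[OF assms(2) _ _ finite_cells]
      unfolding right_folner_net_def net_tendsto_iff_tendsto[OF assms(3)] by blast
  next
    assume "\<forall>E. finite E \<and> E \<subseteq> lcosets\<^bsub>G\<^esub> (stabilizer G act m0) \<longrightarrow>
        net_tendsto I rel (\<lambda>i. real (card (boundary_E G M act m0 gfam E (F i))) / real (card (F i))) 0"
    then show "right_folner_net G M act m0 gfam I rel F"
      using assms(4) folner_ratio_tendsto_zero[OF assms(2) _ cells]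
      unfolding right_folner_net_def net_tendsto_iff_tendsto[OF assms(3)] by blast
  qed
qed

end
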